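(* Let $q$ be a prime power, $n, m \in \mathbb{N}$. For every integer $0 \le d < mq^2$, $$\mathrm{rank}_{\mathbb{F}_q} \mathrm{EVAL}^m(\mathcal{V}_{\mathrm{full}}, W_{d,n}) = |W_{d,n}| = \binom{d+n}{d}.$$
   Context: Work over the field $\mathbb{F} = \mathbb{F}_q(t_1,t_2)$ of rational functions. For $f \in \mathbb{F}[x_1,\dots,x_n]$ and $\mathbf{i} \in \mathbb{Z}_{\ge 0}^n$, the $\mathbf{i}$-th Hasse derivative $f^{(\mathbf{i})}$ is defined by the expansion $f(x+z) = \sum_{\mathbf{j}} f^{(\mathbf{j})}(x) z^{\mathbf{j}}$; the weight of $\mathbf{j}$ is $\mathrm{wt}(\mathbf{j}) = \sum_i j_i$. $W_{d,n}$ is the set of monomials in $x_1,\dots,x_n$ of degree at most $d$. For $S \subset \mathbb{F}^n$ and a set of monomials $W$, $\mathrm{EVAL}^m(S,W)$ is the matrix with columns indexed by $f \in W$, rows indexed by pairs $(x,\mathbf{j}) \in S \times \mathbb{Z}_{\ge 0}^n$ with $\mathrm{wt}(\mathbf{j}) < m$, and $((x,\mathbf{j}),f)$ entry $f^{(\mathbf{j})}(x)$. For a matrix over an extension field of $\mathbb{F}_q$, $\mathrm{rank}_{\mathbb{F}_q}$ is the largest size of a set of columns no nonzero $\mathbb{F}_q$-linear combination of which is zero. $\mathcal{V} = \{u t_1 + v t_2 : u, v \in \mathbb{F}_q^n\}$ and $\mathcal{V}_{\mathrm{full}} = \{u t_1 + v t_2 \in \mathcal{V} : u, v \text{ linearly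 independent over } \mathbb{F}_q\}$. *)

theory Defs
  imports "HOL-Library.Cardinality" "HOL-Computational_Algebra.Polynomial" "HOL-Computational_Algebra.Fraction_Field"
begin

text \<open>The field F = F_q(t1,t2), realised as the fraction field of F_q[t1][t2].
  The base field F_q is a finite field type 'a (q = CARD('a), automatically a prime power).\<close>
type_synonym 'a ratfun2 = "'a poly poly fract"

definition emb :: "'a::field \<Rightarrow> 'a ratfun2" where
  "emb c = Fract [:[:c:]:] 1"

definition t1 :: "'a::field ratfun2" where
  "t1 = Fract [:[:0, 1:]:] 1"

definition t2 :: "'a::field ratfun2" where
  "t2 = Fract [:0, 1:] 1"

definition W :: "nat \<Rightarrow> nat \<Rightarrow> (nat \<Rightarrow> nat) set" where
  "W d n = {a. (\<forall>i\<ge>n. a i = 0) \<and> (\<Sum>i<n. a i) \<le> d}"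

text \<open>Hasse derivative of the monomial x^a, index j, evaluated at point x:
  prod_i binom(a_i, j_i) x_i^(a_i - j_i) (binomials read in the field).\<close>
definition hasse_mono :: "nat \<Rightarrow> (nat \<Rightarrow> nat) \<Rightarrow> (nat \<Rightarrow> nat) \<Rightarrow> (nat \<Rightarrow> 'b::comm_ring_1) \<Rightarrow> 'b" where
  "hasse_mono n a j x = (\<Prod>i<n. of_nat (a i choose j i) * x i ^ (a i - j i))"

definition lin_indep2 :: "nat \<Rightarrow> (nat \<Rightarrow> 'a::field) \<Rightarrow> (nat \<Rightarrow> 'a) \<Rightarrow> bool" where
  "lin_indep2 n u v \<longleftrightarrow> (\<forall>a b. (\<forall>i<n. a * u i + b * v i = 0) \<longrightarrow> a = 0 \<and> b = 0)"

definition V_full :: "nat \<Rightarrow> (nat \<Rightarrow> 'a::field ratfun2) set" where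
  "V_full n = {x. \<exists>u v. (\<forall>i\<ge>n. u i = 0 \<and> v i = 0) \<and> lin_indep2 n u v \<and>
                       x = (\<lambda>i. emb (u i) * t1 + emb (v i) * t2)}"

definition EVAL_rows :: "nat \<Rightarrow> nat \<Rightarrow> (nat \<Rightarrow> 'b) set \<Rightarrow> ((nat \<Rightarrow> 'b) \<times> (nat \<Rightarrow> nat)) set" where
  "EVAL_rows n m S = {(x, j). x \<in> S \<and> (\<forall>i\<ge>n. j i = 0) \<and> (\<Sum>i<n. j i) < m}"

text \<open>Entries of EVAL: ((x,j), f) entry is f^(j)(x), columns indexed by monomials (exponent vectors).\<close>
definition EVAL :: "nat \<Rightarrow> ((nat \<Rightarrow> 'b::comm_ring_1) \<times> (nat \<Rightarrow> nat)) \<Rightarrow> (nat \<Rightarrow> nat) \<Rightarrow> 'b" where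
  "EVAL n r a = hasse_mono n a (snd r) (fst r)"

definition Fq_indep :: "('r \<Rightarrow> 'c \<Rightarrow> 'a::field ratfun2) \<Rightarrow> 'r set \<Rightarrow> 'c set \<Rightarrow> bool" where
  "Fq_indep M R C \<longleftrightarrow> (\<forall>c :: 'c \<Rightarrow> 'a. (\<forall>r\<in>R. (\<Sum>k\<in>C. emb (c k) * M r k) = 0) \<longrightarrow> (\<forall>k\<in>C. c k = 0))"

definition rank_Fq :: "('r \<Rightarrow> 'c \<Rightarrow> 'a::field ratfun2) \<Rightarrow> 'r set \<Rightarrow> 'c set \<Rightarrow> nat" where
  "rank_Fq M R C = Max (card ` {D. D \<subseteq> C \<and> Fq_indep M R D})"

end

theory Submission
  imports Defs "HOL-Computational_Algebra.Polynomial_Factorial"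
begin

text \<open>
  The points u t1 + v t2 with u, v \<in> F_q form a set S of q^2 elements of F, and
  S^n consists of V_full together with the points whose coordinate vectors u, v are
  dependent. The latter are of the form w \<cdot> s with w t1 + v' t2 \<in> V_full for suitable v';
  specialising t2 to 0 and using that the coefficients lie in F_q, vanishing of a Hasse derivative
  at w t1 + v' t2 forces each homogeneous part to vanish, hence vanishing at w \<cdot> s.
  So a vanishing F_q-combination of the columns gives a polynomial of degree \<le> d < m |S| all
  of whose Hasse derivatives of weight < m vanish on the grid S^n, and the
  multiplicity Schwartz-Zippel lemma makes it zero.
\<close>

lemma W_0: "W d 0 = {\<lambda>_. 0}"
  unfolding W_def by auto

lemma W_Suc: "W d (Suc n) = (\<Union>k\<le>d. (\<lambda>b. b(n := k)) ` W (d - k) n)"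
proof (intro equalityI subsetI)
  fix a assume a: "a \<in> W d (Suc n)"
  have "(\<Sum>i<n. (a(n := 0)) i) = (\<Sum>i<n. a i)" by (intro sum.cong) auto
  then have "a(n := 0) \<in> W (d - a n) n" "a n \<le> d" using a unfolding W_def by auto
  moreover have "a = (a(n := 0))(n := a n)" by simp
  ultimately show "a \<in> (\<Union>k\<le>d. (\<lambda>b. b(n := k)) ` W (d - k) n)" by blast
next
  fix a assume "a \<in> (\<Union>k\<le>d. (\<lambda>b. b(n := k)) ` W (d - k) n)"
  then obtain k b where "k \<le> d" "b \<in> W (d - k) n" "a = b(n := k)" by auto
  moreover have "(\<Sum>i<n. a i) = (\<Sum>i<n. b i)" using \<open>a = b(n := k)\<close> by (intro sum.cong) auto
  ultimately show "a \<in> W d (Suc n)" unfolding W_def by auto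
qed

lemma finite_W: "finite (W d n)"
  by (induction n arbitrary: d) (simp_all add: W_0 W_Suc)

lemma inj_on_fun_upd_W: "inj_on (\<lambda>b. b(n := k)) (W e n)"
  unfolding W_def inj_on_def by (auto simp: fun_eq_iff) (metis fun_upd_other order_refl)

lemma W_Suc_fiber: "t \<le> d \<Longrightarrow> {a \<in> W d (Suc n). a n = t} = (\<lambda>b. b(n := t)) ` W (d - t) n"
  unfolding W_Suc by auto

lemma card_W: "card (W d n) = (d + n) choose d"
proof (induction n arbitrary: d)
  case 0
  then show ?case by (simp add: W_0)
next
  case (Suc n)
  have disjoint: "\<forall>k\<in>{..d}. \<forall>k'\<in>{..d}. k \<noteq> k' \<longrightarrow>
      (\<lambda>b. b(n := k)) ` W (d - k) n \<inter> (\<lambda>b. b(n := k')) ` W (d - k') n = {}"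
    by (auto simp: fun_eq_iff) (metis fun_upd_same)
  have "card (W d (Suc n)) = (\<Sum>k\<le>d. card ((\<lambda>b. b(n := k)) ` W (d - k) n))"
    unfolding W_Suc by (intro card_UN_disjoint[OF _ _ disjoint]) (auto simp: finite_W)
  also have "\<dots> = (\<Sum>k\<le>d. (d - k + n) choose (d - k))"
    using Suc by (simp add: card_image[OF inj_on_fun_upd_W])
  also have "\<dots> = (\<Sum>k\<le>d. (n + k) choose k)"
    by (rule sum.reindex_bij_witness[where i="\<lambda>k. d - k" and j="\<lambda>k. d - k"]) (auto simp: add.commute)
  also have "\<dots> = (d + Suc n) choose d"
    by (subst sum_choose_lower) (simp add: add.commute)
  finally show ?case .
qed

lemma pcompose_monom: "monom c e \<circ>\<^sub>p q = smult c (q ^ e)"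
  by (induction e) (simp_all add: monom_0 monom_Suc pcompose_pCons)

lemma coeff_linear_power:
  "coeff ([:b, 1:] ^ e) k = of_nat (e choose k) * (b :: 'a :: comm_semiring_1) ^ (e - k)"
proof (cases "k \<le> e")
  case True
  then show ?thesis by (simp add: coeff_linear_poly_power)
next
  case False
  moreover have "degree ([:b, 1:] ^ e) \<le> e" by (metis degree_linear_power le_refl)
  ultimately show ?thesis by (simp add: coeff_eq_0 binomial_eq_0)
qed

lemma coeff_pcompose_linear_sum_monom:
  "coeff ((\<Sum>a\<in>A. monom (c a) (e a)) \<circ>\<^sub>p [:b, 1:]) k
     = (\<Sum>a\<in>A. c a * of_nat (e a choose k) * (b :: 'a :: comm_semiring_1) ^ (e a - k))"
  unfolding pcompose_sum coeff_sum pcompose_monom by (simp add: coeff_linear_power mult.assoc)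

lemma taylor_coeff_nonzero_below_order:
  fixes p :: "'a :: field poly"
  assumes "p \<noteq> 0"
  shows "\<exists>k\<le>order b p. coeff (p \<circ>\<^sub>p [:b, 1:]) k \<noteq> 0"
proof (rule ccontr)
  assume "\<not> ?thesis"
  then have "monom 1 (Suc (order b p)) dvd p \<circ>\<^sub>p [:b, 1:]"
    unfolding monom_1_dvd_iff' by (simp add: less_Suc_eq_le)
  then obtain h where h: "p \<circ>\<^sub>p [:b, 1:] = monom 1 (Suc (order b p)) * h" by (elim dvdE)
  have "p = (p \<circ>\<^sub>p [:b, 1:]) \<circ>\<^sub>p [:-b, 1:]"
    by (simp add: pcompose_assoc[symmetric] pcompose_pCons)
  also have "\<dots> = [:-b, 1:] ^ Suc (order b p) * (h \<circ>\<^sub>p [:-b, 1:])"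
    unfolding h pcompose_mult pcompose_monom by simp
  finally have "[:-b, 1:] ^ Suc (order b p) dvd p" by (metis dvd_triv_left)
  then show False using order[OF assms] by blast
qed

lemma sum_count_le_size: "finite S \<Longrightarrow> (\<Sum>b\<in>S. count M b) \<le> size M"
proof (induction M)
  case empty
  then show ?case by simp
next
  case (add x M)
  have "(\<Sum>b\<in>S. count (add_mset x M) b) = (\<Sum>b\<in>S. count M b) + (\<Sum>b\<in>S. if b = x then 1 else 0)"
    by (simp add: sum.distrib[symmetric]) (intro sum.cong, auto)
  also have "(\<Sum>b\<in>S. if b = x then 1 else 0 :: nat) \<le> 1"
    using add.prems by (simp add: sum.delta)
  finally show ?case using add by simp
qed

lemma sum_order_le_degree:
  fixes p :: "'a :: idom poly"
  assumes "p \<noteq> 0" "finite S"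
  shows "(\<Sum>b\<in>S. order b p) \<le> degree p"
proof -
  have "(\<Sum>b\<in>S. order b p) = (\<Sum>b\<in>S. count (proots p) b)" using assms(1) by simp
  also have "\<dots> \<le> size (proots p)" by (rule sum_count_le_size[OF assms(2)])
  also have "\<dots> \<le> degree p" by (rule size_proots_le)
  finally show ?thesis .
qed

lemma exists_root_of_small_order:
  fixes p :: "'a :: idom poly"
  assumes "p \<noteq> 0" "finite S" "S \<noteq> {}"
  shows "\<exists>b\<in>S. card S * order b p \<le> degree p"
proof (rule ccontr)
  assume "\<not> ?thesis"
  then have "(\<Sum>b\<in>S. degree p) < (\<Sum>b\<in>S. card S * order b p)"
    using assms(2,3) by (intro sum_strict_mono) auto
  also have "\<dots> = card S * (\<Sum>b\<in>S. order b p)" by (simp add: sum_distrib_left)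
  also have "\<dots> \<le> card S * degree p" using sum_order_le_degree[OF assms(1,2)] by simp
  finally show False by (simp add: mult.commute)
qed

lemma hasse_mono_cong:
  assumes "\<And>i. i < n \<Longrightarrow> a i = a' i" "\<And>i. i < n \<Longrightarrow> j i = j' i" "\<And>i. i < n \<Longrightarrow> x i = x' i"
  shows "hasse_mono n a j x = hasse_mono n a' j' x'"
  unfolding hasse_mono_def using assms by (intro prod.cong) auto

lemma hasse_mono_Suc:
  "hasse_mono (Suc n) a j x = hasse_mono n a j x * (of_nat (a n choose j n) * x n ^ (a n - j n))"
  unfolding hasse_mono_def by simp

lemma hasse_mono_hom:
  assumes "\<And>x y. f (x * y) = f x * f y" "f 1 = 1" "\<And>k. f (of_nat k) = of_nat k"
  shows "f (hasse_mono n a j x) = hasse_mono n a j (\<lambda>i. f (x i))"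
proof -
  have "f (y ^ k) = f y ^ k" for y k by (induction k) (simp_all add: assms(1,2))
  then show ?thesis
    by (induction n) (simp_all add: hasse_mono_Suc assms, simp add: hasse_mono_def assms(2))
qed

lemma hasse_mono_scale:
  "hasse_mono n a j (\<lambda>i. z i * s) = hasse_mono n a j z * (s :: 'b :: comm_ring_1) ^ (\<Sum>i<n. a i - j i)"
  by (induction n) (simp_all add: hasse_mono_Suc power_mult_distrib power_add mult_ac, simp add: hasse_mono_def)

definition hasse_eval ::
    "nat \<Rightarrow> (nat \<Rightarrow> nat) set \<Rightarrow> ((nat \<Rightarrow> nat) \<Rightarrow> 'b) \<Rightarrow> (nat \<Rightarrow> nat) \<Rightarrow> (nat \<Rightarrow> 'b) \<Rightarrow> 'b :: comm_ring_1"
  where "hasse_eval n A C j x = (\<Sum>a\<in>A. C a * hasse_mono n a j x)"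

lemma hasse_eval_cong: "(\<And>i. i < n \<Longrightarrow> x i = y i) \<Longrightarrow> hasse_eval n A C j x = hasse_eval n A C j y"
  unfolding hasse_eval_def by (intro sum.cong refl arg_cong2[where f = "(*)"] hasse_mono_cong) auto

text \<open>The Hasse derivative of index j in the first n variables, evaluated at x, as a polynomial
  in the remaining variable x_n.\<close>
definition partial_hasse_poly ::
    "nat \<Rightarrow> (nat \<Rightarrow> nat) set \<Rightarrow> ((nat \<Rightarrow> nat) \<Rightarrow> 'b) \<Rightarrow> (nat \<Rightarrow> nat) \<Rightarrow> (nat \<Rightarrow> 'b) \<Rightarrow> 'b :: comm_ring_1 poly"
  where "partial_hasse_poly n A C j x = (\<Sum>a\<in>A. monom (C a * hasse_mono n a j x) (a n))"

lemma coeff_partial_hasse_poly: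
  "coeff (partial_hasse_poly n A C j x) k = (\<Sum>a\<in>{a\<in>A. a n = k}. C a * hasse_mono n a j x)"
  if "finite A"
  unfolding partial_hasse_poly_def coeff_sum coeff_monom using that
  by (simp add: sum.inter_filter eq_commute)

lemma degree_partial_hasse_poly:
  assumes "finite A" "\<And>a. a \<in> A \<Longrightarrow> C a \<noteq> 0 \<Longrightarrow> a n \<le> t"
  shows "degree (partial_hasse_poly n A C j x) \<le> t"
proof (rule degree_le, intro allI impI)
  fix k assume "t < k"
  then show "coeff (partial_hasse_poly n A C j x) k = 0"
    unfolding coeff_partial_hasse_poly[OF assms(1)] using assms(2) by (intro sum.neutral) force
qed

lemma coeff_partial_hasse_poly_W:
  assumes "t \<le> d"
  shows "coeff (partial_hasse_poly n (W d (Suc n)) C j x) t = hasse_eval n (W (d - t) n) (\<lambda>b. C (b(n := t))) j x"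
proof -
  have "coeff (partial_hasse_poly n (W d (Suc n)) C j x) t
      = (\<Sum>b\<in>W (d - t) n. C (b(n := t)) * hasse_mono n (b(n := t)) j x)"
    unfolding coeff_partial_hasse_poly[OF finite_W] W_Suc_fiber[OF assms]
    by (simp add: sum.reindex[OF inj_on_fun_upd_W])
  also have "\<dots> = hasse_eval n (W (d - t) n) (\<lambda>b. C (b(n := t))) j x"
    unfolding hasse_eval_def by (intro sum.cong refl arg_cong2[where f = "(*)"] hasse_mono_cong) auto
  finally show ?thesis .
qed

lemma taylor_coeff_partial_hasse_poly:
  "coeff (partial_hasse_poly n A C j x \<circ>\<^sub>p [:b, 1:]) k = hasse_eval (Suc n) A C (j(n := k)) (x(n := b))"
  unfolding partial_hasse_poly_def coeff_pcompose_linear_sum_monom hasse_eval_def hasse_mono_Suc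
  by (intro sum.cong refl) (simp add: mult.assoc hasse_mono_cong[of n _ _ "j(n := k)" j "x(n := b)" x])

lemma W_Suc_drop_last: "a \<in> W d (Suc n) \<Longrightarrow> a(n := 0) \<in> W (d - a n) n"
  unfolding W_Suc by (auto simp: W_def fun_upd_idem)

text \<open>Multiplicity Schwartz-Zippel, in the form that survives induction on n: a nonzero
  polynomial of degree \<le> d has a nonvanishing Hasse derivative of weight \<le> d / |S| somewhere
  on S^n. The induction step looks at the top coefficient in x_n.\<close>
lemma hasse_eval_nonvanishing:
  fixes S :: "'F :: field set" and C :: "(nat \<Rightarrow> nat) \<Rightarrow> 'F"
  assumes S: "finite S" "S \<noteq> {}" and "a \<in> W d n" "C a \<noteq> 0"
  shows "\<exists>x j. (\<forall>i<n. x i \<in> S) \<and> (\<forall>i\<ge>n. j i = 0) \<and> card S * (\<Sum>i<n. j i) \<le> d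
               \<and> hasse_eval n (W d n) C j x \<noteq> 0"
  using assms(3,4)
proof (induction n arbitrary: d C a)
  case 0
  then show ?case by (auto simp: W_0 hasse_eval_def hasse_mono_def)
next
  case (Suc n)
  define T where "T = (\<lambda>a. a n) ` {a \<in> W d (Suc n). C a \<noteq> 0}"
  define t where "t = Max T"
  have "finite T" "T \<noteq> {}" unfolding T_def using Suc.prems by (auto simp: finite_W)
  then have T: "t \<in> T" "\<And>s. s \<in> T \<Longrightarrow> s \<le> t" unfolding t_def by auto
  then obtain a0 where a0: "a0 \<in> W d (Suc n)" "C a0 \<noteq> 0" "a0 n = t" unfolding T_def by blast
  then have "t \<le> d" unfolding W_def by (auto elim: order.trans[rotated])
  define g where "g = partial_hasse_poly n (W d (Suc n)) C"
  obtain x j where x: "\<forall>i<n. x i \<in> S" and j: "\<forall>i\<ge>n. j i = 0"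
      and j_small: "card S * (\<Sum>i<n. j i) \<le> d - t"
      and slice: "hasse_eval n (W (d - t) n) (\<lambda>b. C (b(n := t))) j x \<noteq> 0"
    using Suc.IH[OF W_Suc_drop_last[OF a0(1)], of "\<lambda>b. C (b(n := t))"] a0
    by (metis fun_upd_triv fun_upd_upd)
  have "coeff (g j x) t \<noteq> 0"
    unfolding g_def coeff_partial_hasse_poly_W[OF \<open>t \<le> d\<close>] using slice .
  then have g: "g j x \<noteq> 0" by auto
  have "degree (g j x) \<le> t"
    unfolding g_def using T(2) by (intro degree_partial_hasse_poly) (auto simp: finite_W T_def)
  moreover obtain b where b: "b \<in> S" "card S * order b (g j x) \<le> degree (g j x)"
    using exists_root_of_small_order[OF g S] by blast
  moreover obtain k where "k \<le> order b (g j x)" and k: "coeff (g j x \<circ>\<^sub>p [:b, 1:]) k \<noteq> 0"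
    using taylor_coeff_nonzero_below_order[OF g] by blast
  ultimately have "card S * k \<le> t" by (meson le_trans mult_le_mono2)
  have "(\<Sum>i<Suc n. (j(n := k)) i) = (\<Sum>i<n. j i) + k"
    by (simp add: sum.cong[of "{..<n}" _ "j(n := k)" j])
  then have "card S * (\<Sum>i<Suc n. (j(n := k)) i) \<le> d"
    using j_small \<open>card S * k \<le> t\<close> \<open>t \<le> d\<close> by (simp add: add_mult_distrib2)
  moreover have "hasse_eval (Suc n) (W d (Suc n)) C (j(n := k)) (x(n := b)) \<noteq> 0"
    using k unfolding g_def taylor_coeff_partial_hasse_poly .
  moreover have "\<forall>i<Suc n. (x(n := b)) i \<in> S" using x b(1) by (auto simp: less_Suc_eq)
  moreover have "\<forall>i\<ge>Suc n. (j(n := k)) i = 0" using j by auto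
  ultimately show ?case by blast
qed

lemma hasse_eval_vanishing_on_grid:
  fixes S :: "'F :: field set" and C :: "(nat \<Rightarrow> nat) \<Rightarrow> 'F"
  assumes "finite S" "d < m * card S"
    and "\<And>x j. \<forall>i<n. x i \<in> S \<Longrightarrow> \<forall>i\<ge>n. j i = 0 \<Longrightarrow> (\<Sum>i<n. j i) < m \<Longrightarrow> hasse_eval n (W d n) C j x = 0"
    and "a \<in> W d n"
  shows "C a = 0"
proof (rule ccontr)
  assume "C a \<noteq> 0"
  moreover have "S \<noteq> {}" using assms(2) by auto
  ultimately obtain x j where "\<forall>i<n. x i \<in> S" "\<forall>i\<ge>n. j i = 0" and j: "card S * (\<Sum>i<n. j i) \<le> d"
      and "hasse_eval n (W d n) C j x \<noteq> 0"
    using hasse_eval_nonvanishing[OF assms(1) _ assms(4)] by blast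
  moreover have "(\<Sum>i<n. j i) < m"
    using j assms(2) by (metis le_less_trans mult.commute mult_less_cancel1)
  ultimately show False using assms(3) by blast
qed

lemma to_fract_of_nat: "to_fract (of_nat k) = of_nat k"
  by (induction k) simp_all

lemma emb_eq_to_fract: "emb c = to_fract [:[:c:]:]"
  unfolding emb_def to_fract_def ..

lemma emb_0: "emb 0 = 0" and emb_1: "emb 1 = 1"
  and emb_add: "emb (x + y) = emb x + emb y" and emb_mult: "emb (x * y) = emb x * emb y"
  and emb_eq_0_iff: "emb x = 0 \<longleftrightarrow> x = 0"
  unfolding emb_eq_to_fract to_fract_1[symmetric] to_fract_add[symmetric] to_fract_mult[symmetric]
  by (simp_all del: to_fract_1 to_fract_add to_fract_mult add: one_pCons)

lemma emb_of_nat: "emb (of_nat k) = of_nat k"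
  unfolding emb_eq_to_fract by (simp add: of_nat_poly to_fract_of_nat[symmetric])

lemma emb_sum: "emb (sum f A) = (\<Sum>a\<in>A. emb (f a))"
  by (induction A rule: infinite_finite_induct) (simp_all add: emb_0 emb_add)

lemma emb_hasse_mono: "emb (hasse_mono n a j x) = hasse_mono n a j (\<lambda>i. emb (x i))"
  by (rule hasse_mono_hom) (simp_all add: emb_mult emb_1 emb_of_nat)

lemma emb_t1_plus_emb_t2: "emb a * t1 + emb b * t2 = to_fract [:[:0, a:], [:b:]:]"
  unfolding emb_eq_to_fract t1_def t2_def to_fract_def[symmetric] to_fract_mult[symmetric]
    to_fract_add[symmetric] by simp

definition Fq_grid :: "'a :: field ratfun2 set" where
  "Fq_grid = {emb a * t1 + emb b * t2 | a b. True}"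

lemma card_Fq_grid: "card (Fq_grid :: 'a :: {finite, field} ratfun2 set) = CARD('a) ^ 2"
proof -
  have "inj (\<lambda>(a :: 'a, b). emb a * t1 + emb b * t2)"
    unfolding inj_def emb_t1_plus_emb_t2 by auto
  moreover have "Fq_grid = (\<lambda>(a :: 'a, b). emb a * t1 + emb b * t2) ` UNIV"
    unfolding Fq_grid_def by auto
  ultimately have "card (Fq_grid :: 'a ratfun2 set) = card (UNIV :: ('a \<times> 'a) set)"
    by (metis card_image)
  then show ?thesis by (simp add: power2_eq_square)
qed

text \<open>Everything lives in F_q[t1][t2], where t2 may be specialised to 0.\<close>
lemma hasse_eval_specialize_t2:
  fixes c :: "(nat \<Rightarrow> nat) \<Rightarrow> 'a :: field" and w v :: "nat \<Rightarrow> 'a"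
  assumes "hasse_eval n A (\<lambda>a. emb (c a)) j (\<lambda>i. emb (w i) * t1 + emb (v i) * t2) = 0"
  shows "(\<Sum>a\<in>A. monom (c a * hasse_mono n a j w) (\<Sum>i<n. a i - j i)) = 0"
proof -
  define P where "P = (\<Sum>a\<in>A. [:[:c a:]:] * hasse_mono n a j (\<lambda>i. [:[:0, w i:], [:v i:]:]))"
  have "to_fract P = hasse_eval n A (\<lambda>a. emb (c a)) j (\<lambda>i. emb (w i) * t1 + emb (v i) * t2)"
    unfolding P_def hasse_eval_def emb_t1_plus_emb_t2
    unfolding emb_eq_to_fract to_fract_sum to_fract_mult
    by (simp only: hasse_mono_hom[where f = to_fract, OF to_fract_mult to_fract_1 to_fract_of_nat])
  then have "poly P 0 = 0" using assms by simp
  moreover have "hasse_mono n a j (\<lambda>i. [:0, w i:]) = smult (hasse_mono n a j w) ([:0, 1:] ^ (\<Sum>i<n. a i - j i))"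
    for a
  proof -
    have "hasse_mono n a j (\<lambda>i. [:w i:]) = [:hasse_mono n a j w:]"
      by (rule hasse_mono_hom[symmetric]) (simp_all add: of_nat_poly one_pCons)
    then show ?thesis using hasse_mono_scale[of n a j "\<lambda>i. [:w i:]" "[:0, 1:]"] by simp
  qed
  then have "poly P 0 = (\<Sum>a\<in>A. monom (c a * hasse_mono n a j w) (\<Sum>i<n. a i - j i))"
    unfolding P_def poly_sum poly_mult
    by (simp add: hasse_mono_hom[where f = "\<lambda>p. poly p 0"] of_nat_poly monom_altdef mult.commute)
  ultimately show ?thesis by simp
qed

lemma sum_emb_power_eq_0:
  fixes f :: "'b \<Rightarrow> 'a :: field"
  assumes "finite A" "(\<Sum>a\<in>A. monom (f a) (e a)) = 0"
  shows "(\<Sum>a\<in>A. emb (f a) * s ^ e a) = 0"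
proof -
  have coeff_0: "(\<Sum>a\<in>{a\<in>A. e a = k}. f a) = 0" for k
  proof -
    have "coeff (\<Sum>a\<in>A. monom (f a) (e a)) k = (\<Sum>a\<in>{a\<in>A. e a = k}. f a)"
      unfolding coeff_sum coeff_monom using assms(1) by (simp add: sum.inter_filter eq_commute)
    then show ?thesis using assms(2) by simp
  qed
  have "(\<Sum>a\<in>A. emb (f a) * s ^ e a) = (\<Sum>k\<in>e ` A. \<Sum>a\<in>{a\<in>A. e a = k}. emb (f a) * s ^ e a)"
    using assms(1) by (rule sum.image_gen)
  also have "\<dots> = (\<Sum>k\<in>e ` A. emb (\<Sum>a\<in>{a\<in>A. e a = k}. f a) * s ^ k)"
    unfolding emb_sum sum_distrib_right by (intro sum.cong refl) auto
  also have "\<dots> = 0" unfolding coeff_0 by (simp add: emb_0)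
  finally show ?thesis .
qed

lemma hasse_eval_scaled_point:
  fixes c :: "(nat \<Rightarrow> nat) \<Rightarrow> 'a :: field" and w v :: "nat \<Rightarrow> 'a"
  assumes "finite A" "hasse_eval n A (\<lambda>a. emb (c a)) j (\<lambda>i. emb (w i) * t1 + emb (v i) * t2) = 0"
  shows "hasse_eval n A (\<lambda>a. emb (c a)) j (\<lambda>i. emb (w i) * s) = 0"
proof -
  have "hasse_eval n A (\<lambda>a. emb (c a)) j (\<lambda>i. emb (w i) * s)
      = (\<Sum>a\<in>A. emb (c a * hasse_mono n a j w) * s ^ (\<Sum>i<n. a i - j i))"
    unfolding hasse_eval_def hasse_mono_scale emb_mult emb_hasse_mono by (simp add: mult.assoc)
  also have "\<dots> = 0"
    by (rule sum_emb_power_eq_0[OF assms(1) hasse_eval_specialize_t2[OF assms(2)]])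
  finally show ?thesis .
qed

lemma not_lin_indep2_decomp:
  assumes "\<not> lin_indep2 n u v" "0 < n"
  shows "\<exists>w p q. (\<exists>k<n. w k \<noteq> 0) \<and> (\<forall>i<n. u i = p * w i \<and> v i = q * w i)"
proof -
  obtain \<alpha> \<beta> where dep: "\<forall>i<n. \<alpha> * u i + \<beta> * v i = 0" and nontriv: "\<alpha> \<noteq> 0 \<or> \<beta> \<noteq> 0"
    using assms(1) unfolding lin_indep2_def by blast
  consider (u) k where "k < n" "u k \<noteq> 0" | (v) k where "\<forall>i<n. u i = 0" "k < n" "v k \<noteq> 0"
    | (zero) "\<forall>i<n. u i = 0 \<and> v i = 0"
    by blast
  then show ?thesis
  proof cases
    case (u k)
    then have "\<beta> \<noteq> 0" using dep nontriv by force
    then have "\<forall>i<n. v i = (- \<alpha> / \<beta>) * u i"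
      using dep by (auto simp: field_simps add_eq_0_iff2)
    then show ?thesis using u by (intro exI[of _ u] exI[of _ 1] exI[of _ "- \<alpha> / \<beta>"]) auto
  next
    case (v k)
    then show ?thesis by (intro exI[of _ v] exI[of _ 0] exI[of _ 1]) auto
  qed (use assms(2) in \<open>intro exI[of _ "\<lambda>_. 1"] exI[of _ 0], auto\<close>)
qed

lemma lin_indep2_extend:
  assumes "2 \<le> n" "k < n" "w k \<noteq> 0"
  shows "\<exists>v. (\<forall>i\<ge>n. v i = 0) \<and> lin_indep2 n w v"
proof -
  define l where "l = (if k = 0 then 1 else 0 :: nat)"
  have l: "l < n" "l \<noteq> k" unfolding l_def using assms(1) by auto
  have "lin_indep2 n w (\<lambda>i. if i = l then 1 else 0)"
    unfolding lin_indep2_def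
  proof (intro allI impI)
    fix a b assume h: "\<forall>i<n. a * w i + b * (if i = l then 1 else 0) = 0"
    then have "a = 0" using h[rule_format, OF assms(2)] l(2) assms(3) by simp
    then show "a = 0 \<and> b = 0" using h[rule_format, OF l(1)] by simp
  qed
  then show ?thesis using l(1) by (intro exI[of _ "\<lambda>i. if i = l then 1 else 0"]) auto
qed

lemma finite_Fq_grid: "finite (Fq_grid :: 'a :: {finite, field} ratfun2 set)"
  using card_Fq_grid[where 'a = 'a] by (intro card_ge_0_finite) simp

lemma Fq_grid_coordinates:
  fixes x :: "nat \<Rightarrow> 'a :: field ratfun2"
  assumes "\<forall>i<n. x i \<in> Fq_grid"
  obtains u v where "\<forall>i\<ge>n. u i = 0 \<and> v i = 0" "\<forall>i<n. x i = emb (u i) * t1 + emb (v i) * t2"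
proof -
  obtain u v where uv: "\<And>i. i < n \<Longrightarrow> x i = emb (u i) * t1 + emb (v i) * t2"
    using assms unfolding Fq_grid_def by simp metis
  show ?thesis
    by (rule that[of "\<lambda>i. if i < n then u i else 0" "\<lambda>i. if i < n then v i else 0"]) (auto simp: uv)
qed

lemma V_fullI:
  "\<forall>i\<ge>n. u i = 0 \<and> v i = 0 \<Longrightarrow> lin_indep2 n u v \<Longrightarrow> (\<lambda>i. emb (u i) * t1 + emb (v i) * t2) \<in> V_full n"
  unfolding V_full_def by blast

lemma hasse_eval_vanishes_on_Fq_grid:
  fixes c :: "(nat \<Rightarrow> nat) \<Rightarrow> 'a :: field"
  assumes "2 \<le> n" "finite A"
    and V_full: "\<And>y. y \<in> V_full n \<Longrightarrow> hasse_eval n A (\<lambda>a. emb (c a)) j y = 0"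
    and "\<forall>i<n. x i \<in> Fq_grid"
  shows "hasse_eval n A (\<lambda>a. emb (c a)) j x = 0"
proof -
  obtain u v where uv: "\<forall>i\<ge>n. u i = 0 \<and> v i = 0" and x: "\<forall>i<n. x i = emb (u i) * t1 + emb (v i) * t2"
    using Fq_grid_coordinates[OF assms(4)] by blast
  show ?thesis
  proof (cases "lin_indep2 n u v")
    case True
    have "hasse_eval n A (\<lambda>a. emb (c a)) j x
        = hasse_eval n A (\<lambda>a. emb (c a)) j (\<lambda>i. emb (u i) * t1 + emb (v i) * t2)"
      using x by (intro hasse_eval_cong) simp
    also have "\<dots> = 0" by (rule V_full[OF V_fullI[OF uv True]])
    finally show ?thesis .
  next
    case False
    moreover have "0 < n" using assms(1) by simp
    ultimately obtain w p q k where k: "k < n" "w k \<noteq> 0" and w: "\<forall>i<n. u i = p * w i \<and> v i = q * w i"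
      using not_lin_indep2_decomp by blast
    define w' where "w' i = (if i < n then w i else 0)" for i
    obtain v' where v': "\<forall>i\<ge>n. v' i = 0" "lin_indep2 n w' v'"
      using lin_indep2_extend[OF assms(1) k(1), of w'] k unfolding w'_def by auto
    have "\<forall>i\<ge>n. w' i = 0 \<and> v' i = 0" using v'(1) unfolding w'_def by simp
    have "hasse_eval n A (\<lambda>a. emb (c a)) j x
        = hasse_eval n A (\<lambda>a. emb (c a)) j (\<lambda>i. emb (w' i) * (emb p * t1 + emb q * t2))"
      using x w unfolding w'_def by (intro hasse_eval_cong) (simp add: emb_mult algebra_simps)
    also have "\<dots> = 0"
      by (rule hasse_eval_scaled_point[OF assms(2) V_full[OF V_fullI]]) fact+
    finally show ?thesis .
  qed
qed

lemma Fq_indep_EVAL_W: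
  assumes "2 \<le> n" "d < m * CARD('a :: {finite, field}) ^ 2"
  shows "Fq_indep (EVAL n :: _ \<Rightarrow> _ \<Rightarrow> 'a ratfun2) (EVAL_rows n m (V_full n)) (W d n)"
  unfolding Fq_indep_def
proof (intro allI impI ballI)
  fix c :: "(nat \<Rightarrow> nat) \<Rightarrow> 'a" and a
  assume rows: "\<forall>r\<in>EVAL_rows n m (V_full n). (\<Sum>k\<in>W d n. emb (c k) * EVAL n r k) = 0"
  assume "a \<in> W d n"
  have "emb (c a) = 0"
  proof (rule hasse_eval_vanishing_on_grid[OF finite_Fq_grid _ _ \<open>a \<in> W d n\<close>])
    show "d < m * card (Fq_grid :: 'a ratfun2 set)" using assms(2) by (simp add: card_Fq_grid)
    fix x :: "nat \<Rightarrow> 'a ratfun2" and j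
    assume "\<forall>i<n. x i \<in> Fq_grid" "\<forall>i\<ge>n. j i = 0" "(\<Sum>i<n. j i) < m"
    moreover have "hasse_eval n (W d n) (\<lambda>a. emb (c a)) j y = 0" if "y \<in> V_full n" for y
    proof -
      have "(y, j) \<in> EVAL_rows n m (V_full n)"
        unfolding EVAL_rows_def using that \<open>\<forall>i\<ge>n. j i = 0\<close> \<open>(\<Sum>i<n. j i) < m\<close> by simp
      from rows[rule_format, OF this] show ?thesis unfolding EVAL_def hasse_eval_def by simp
    qed
    ultimately show "hasse_eval n (W d n) (\<lambda>a. emb (c a)) j x = 0"
      using hasse_eval_vanishes_on_Fq_grid[OF assms(1) finite_W] by blast
  qed
  then show "c a = 0" by (simp add: emb_eq_0_iff)
qed

lemma rank_Fq_eq_card: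
  assumes "finite C" "Fq_indep M R C"
  shows "rank_Fq M R C = card C"
  unfolding rank_Fq_def
proof (rule Max_eqI)
  show "finite (card ` {D. D \<subseteq> C \<and> Fq_indep M R D})" using assms(1) by simp
qed (use assms in \<open>auto intro: card_mono\<close>)

theorem mainTheorem15:
  fixes n m d :: nat
  assumes "n \<ge> 2"
    and "d < m * CARD('a::{finite, field}) ^ 2"
  shows "rank_Fq (EVAL n :: _ \<Rightarrow> _ \<Rightarrow> 'a ratfun2) (EVAL_rows n m (V_full n)) (W d n) = card (W d n)
         \<and> card (W d n) = (d + n) choose d"
  using rank_Fq_eq_card[OF finite_W Fq_indep_EVAL_W[OF assms]] card_W by blast

end
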